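(* For a strictly positive probability vector $\pi=(\pi_1,\pi_2,\pi_3,\pi_4)$ let $$\mathrm{HKY}_\pi^+=\left\{\begin{pmatrix}\ast & \pi_2\kappa & \lambda\pi_3 & \lambda\pi_4\\ \pi_1\kappa & \ast & \lambda\pi_3 & \lambda\pi_4\\ \lambda\pi_1 & \lambda\pi_2 & \ast & \pi_4\kappa\\ \lambda\pi_1 & \lambda\pi_2 & \pi_3\kappa & \ast\end{pmatrix}:\kappa,\lambda\ge 0\right\},$$ where each $\ast$ denotes the diagonal entry making the row sum zero. If $\pi_1+\pi_2\neq\pi_3+\pi_4$, then $\operatorname{span}_{\mathbb{R}}(\mathrm{HKY}_\pi^+)$ is not closed under $A\odot B=AB+BA$ (so $\mathrm{HKY}_\pi^+$ is not uniformization stable). Consequently $\mathrm{HKY}^+:=\bigcup_\pi\mathrm{HKY}_\pi^+$ (union over all strictly positive probability vectors) is not uniformization stable.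
   Context: A strictly positive probability vector has all entries positive and summing to 1. A set $\mathcal{M}$ of $4\times4$ rate matrices (zero row sums, nonnegative off-diagonal entries) is uniformization stable if for every $Q\in\mathcal{M}$ and $t\ge0$ there is $\hat Q\in\mathcal{M}$ with $e^{Qt}-I_4=\hat Q$. *)

theory Defs
  imports "HOL-Analysis.Analysis" "HOL-Library.Numeral_Type"
begin

text \<open>4x4 real matrices are indexed by the type 4 = {0,1,2,3};
  paper index k (1..4) corresponds to index k-1 here.\<close>

type_synonym mat4 = "real^4^4"

primrec mpow :: "mat4 \<Rightarrow> nat \<Rightarrow> mat4" where
  "mpow Q 0 = mat 1"
| "mpow Q (Suc n) = Q ** mpow Q n"

definition mexp :: "mat4 \<Rightarrow> mat4" where
  "mexp Q = (\<Sum>k. (1 / fact k) *\<^sub>R mpow Q k)"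

definition rate_matrix :: "mat4 \<Rightarrow> bool" where
  "rate_matrix Q \<longleftrightarrow> (\<forall>i. (\<Sum>j\<in>UNIV. Q$i$j) = 0) \<and> (\<forall>i j. i \<noteq> j \<longrightarrow> Q$i$j \<ge> 0)"

definition pos_prob_vec :: "real^4 \<Rightarrow> bool" where
  "pos_prob_vec p \<longleftrightarrow> (\<forall>i. p$i > 0) \<and> (\<Sum>i\<in>UNIV. p$i) = 1"

definition unif_stable :: "mat4 set \<Rightarrow> bool" where
  "unif_stable M \<longleftrightarrow>
     (\<forall>Q\<in>M. \<forall>t::real. t \<ge> 0 \<longrightarrow> (\<exists>Q'\<in>M. mexp (t *\<^sub>R Q) - mat 1 = Q'))"

definition hky_off :: "real^4 \<Rightarrow> real \<Rightarrow> real \<Rightarrow> 4 \<Rightarrow> 4 \<Rightarrow> real" where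
  "hky_off p kap lam i j =
     (if i = j then 0
      else if (i \<in> {0,1}) = (j \<in> {0,1}) then kap * p$j else lam * p$j)"

definition hky_mat :: "real^4 \<Rightarrow> real \<Rightarrow> real \<Rightarrow> mat4" where
  "hky_mat p kap lam = (\<chi> i j. if i = j then - (\<Sum>k\<in>UNIV - {i}. hky_off p kap lam i k)
                                else hky_off p kap lam i j)"

definition HKY_plus :: "real^4 \<Rightarrow> mat4 set" where
  "HKY_plus p = {hky_mat p kap lam | kap lam. kap \<ge> 0 \<and> lam \<ge> 0}"

definition HKY_plus_all :: "mat4 set" where
  "HKY_plus_all = (\<Union>p\<in>{p. pos_prob_vec p}. HKY_plus p)"

definition closed_odot :: "mat4 set \<Rightarrow> bool" where
  "closed_odot S \<longleftrightarrow> (\<forall>A\<in>S. \<forall>B\<in>S. A ** B + B ** A \<in> S)"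

end

theory Submission
  imports Defs
begin

text \<open>Write \<open>s = \<pi>\<^sub>1 + \<pi>\<^sub>2\<close>, \<open>t = \<pi>\<^sub>3 + \<pi>\<^sub>4\<close> and \<open>e = exp(-1)\<close>. The rate matrix \<open>Q\<close> with
  \<open>\<kappa> = 2\<close>, \<open>\<lambda> = 1\<close> is diagonalised by four explicit projections with eigenvalues
  \<open>0, -1, -(1 + s), -(1 + t)\<close>, so \<open>exp Q - I\<close> is known in closed form. If it were an HKY matrix
  with parameters \<open>(q, \<kappa>', \<lambda>')\<close>, the entries between the two classes force \<open>\<lambda>' = 1 - e\<close> and
  \<open>q = \<pi>\<close>, and the entries within the two classes give \<open>\<kappa>' = 1 - e + e g(s) = 1 - e + e g(t)\<close>
  with \<open>g(x) = (1 - exp(-x)) / x\<close>; as \<open>g\<close> is strictly decreasing, \<open>s = t\<close>.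
  For the span, every element \<open>M\<close> of \<open>span HKY\<^sub>\<pi>\<^sup>+\<close> satisfies the linear relation
  \<open>\<pi>\<^sub>4 M\<^sub>1\<^sub>2 = \<pi>\<^sub>2 M\<^sub>3\<^sub>4\<close>, which \<open>K \<odot> K = 2 K\<^sup>2\<close> violates for the pure transition matrix \<open>K\<close>
  (\<open>\<kappa> = 1\<close>, \<open>\<lambda> = 0\<close>) unless \<open>s = t\<close>.\<close>

lemma UNIV_4: "(UNIV :: 4 set) = {0, 1, 2, 3}"
proof -
  have "x \<in> {0, 1, 2, 3}" for x :: 4
  proof (induct x)
    case (of_int z)
    then have "z = 0 \<or> z = 1 \<or> z = 2 \<or> z = 3" by fastforce
    then show ?case by auto
  qed
  then show ?thesis by blast
qed

lemma sum_UNIV_4: "(\<Sum>i\<in>UNIV. f i) = f 0 + f 1 + f 2 + f (3 :: 4)"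
  unfolding UNIV_4 by (simp add: add.assoc)

lemma sum_UNIV_4_remove:
  fixes f :: "4 \<Rightarrow> real"
  shows "(\<Sum>k\<in>UNIV - {i}. f k) = f 0 + f 1 + f 2 + f 3 - f i"
  using sum.remove[of UNIV i f] by (simp add: sum_UNIV_4)

lemma mat4_eqI:
  fixes A B :: mat4
  assumes "\<And>i j. i \<in> {0, 1, 2, 3} \<Longrightarrow> j \<in> {0, 1, 2, 3} \<Longrightarrow> A$i$j = B$i$j"
  shows "A = B"
proof -
  have "\<And>i j. A$i$j = B$i$j" using assms UNIV_4 by blast
  then show ?thesis by (simp add: vec_eq_iff)
qed

lemma matrix_mult_4:
  "((A :: mat4) ** B)$i$j = A$i$0 * B$0$j + A$i$1 * B$1$j + A$i$2 * B$2$j + A$i$3 * B$3$j"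
  by (simp add: matrix_matrix_mult_def sum_UNIV_4)

lemma matrix_mult_sum_right:
  "(A :: 'a :: semiring_1^'n^'m) ** (\<Sum>i\<in>I. B i) = (\<Sum>i\<in>I. A ** B i)"
  by (induction I rule: infinite_finite_induct) (simp_all add: matrix_add_ldistrib)

lemma mpow_spectral:
  assumes "(\<Sum>i\<in>I. E i) = mat 1" and "\<And>i. i \<in> I \<Longrightarrow> Q ** E i = c i *\<^sub>R E i"
  shows "mpow Q k = (\<Sum>i\<in>I. c i ^ k *\<^sub>R E i)"
proof (induction k)
  case 0
  then show ?case using assms(1) by simp
next
  case (Suc k)
  have "mpow Q (Suc k) = (\<Sum>i\<in>I. c i ^ k *\<^sub>R (Q ** E i))"
    by (simp add: Suc matrix_mult_sum_right matrix_scalar_ac scalar_matrix_assoc)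
  also have "\<dots> = (\<Sum>i\<in>I. c i ^ Suc k *\<^sub>R E i)"
    by (rule sum.cong) (simp_all add: assms(2) mult.commute)
  finally show ?case .
qed

lemma mexp_spectral:
  assumes "(\<Sum>i\<in>I. E i) = mat 1" and "\<And>i. i \<in> I \<Longrightarrow> Q ** E i = c i *\<^sub>R E i"
  shows "mexp Q = (\<Sum>i\<in>I. exp (c i) *\<^sub>R E i)"
proof -
  have "(\<lambda>k. (1 / fact k) * c i ^ k) sums exp (c i)" for i
    using exp_converges[of "c i"] by (simp add: divide_inverse mult.commute)
  then have "(\<lambda>k. \<Sum>i\<in>I. ((1 / fact k) * c i ^ k) *\<^sub>R E i) sums (\<Sum>i\<in>I. exp (c i) *\<^sub>R E i)"
    by (intro sums_sum sums_scaleR_left)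
  moreover have "(1 / fact k) *\<^sub>R mpow Q k = (\<Sum>i\<in>I. ((1 / fact k) * c i ^ k) *\<^sub>R E i)" for k
    by (simp add: mpow_spectral[OF assms] scaleR_sum_right)
  ultimately show ?thesis
    unfolding mexp_def by (simp add: sums_iff)
qed

lemma exp_neg_secant_strict_decreasing:
  fixes x y :: real
  assumes "0 < x" "x < y"
  shows "(1 - exp (-y)) / y < (1 - exp (-x)) / x"
proof (rule DERIV_neg_imp_decreasing[OF assms(2)])
  fix u :: real assume u: "x \<le> u" "u \<le> y"
  then have "u > 0" using assms by linarith
  have "1 + u < exp u"
    using exp_lower_Taylor_quadratic[of u] \<open>u > 0\<close> by (smt (verit) zero_less_power divide_pos_pos)
  then have "(1 + u) * exp (-u) < 1"
    by (simp add: exp_minus field_simps)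
  then have "((1 + u) * exp (-u) - 1) / u\<^sup>2 < 0"
    using \<open>u > 0\<close> by (simp add: divide_neg_pos)
  moreover have "((\<lambda>v. (1 - exp (-v)) / v) has_real_derivative ((1 + u) * exp (-u) - 1) / u\<^sup>2) (at u)"
    using \<open>u > 0\<close> by (auto intro!: derivative_eq_intros simp: field_simps power2_eq_square)
  ultimately show "\<exists>d. ((\<lambda>v. (1 - exp (-v)) / v) has_real_derivative d) (at u) \<and> d < 0"
    by blast
qed

lemma exp_neg_secant_inj:
  fixes x y :: real
  assumes "0 < x" "0 < y" "(1 - exp (-x)) / x = (1 - exp (-y)) / y"
  shows "x = y"
  using exp_neg_secant_strict_decreasing[of x y] exp_neg_secant_strict_decreasing[of y x] assms
  by (cases x y rule: linorder_cases) auto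

lemma pos_prob_vecD:
  assumes "pos_prob_vec p"
  shows "p$0 > 0" "p$1 > 0" "p$2 > 0" "p$3 > 0" "p$0 + p$1 + p$2 + p$3 = 1"
  using assms by (auto simp: pos_prob_vec_def sum_UNIV_4)

lemma hky_mat_entries:
  "hky_mat p k l $0$0 = -(k*p$1 + l*p$2 + l*p$3)" "hky_mat p k l $0$1 = k*p$1"
  "hky_mat p k l $0$2 = l*p$2" "hky_mat p k l $0$3 = l*p$3"
  "hky_mat p k l $1$0 = k*p$0" "hky_mat p k l $1$1 = -(k*p$0 + l*p$2 + l*p$3)"
  "hky_mat p k l $1$2 = l*p$2" "hky_mat p k l $1$3 = l*p$3"
  "hky_mat p k l $2$0 = l*p$0" "hky_mat p k l $2$1 = l*p$1"
  "hky_mat p k l $2$2 = -(l*p$0 + l*p$1 + k*p$3)" "hky_mat p k l $2$3 = k*p$3"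
  "hky_mat p k l $3$0 = l*p$0" "hky_mat p k l $3$1 = l*p$1"
  "hky_mat p k l $3$2 = k*p$2" "hky_mat p k l $3$3 = -(l*p$0 + l*p$1 + k*p$2)"
  by (simp_all add: hky_mat_def hky_off_def sum_UNIV_4_remove)

lemma hky_mat_in_HKY_plus: "k \<ge> 0 \<Longrightarrow> l \<ge> 0 \<Longrightarrow> hky_mat p k l \<in> HKY_plus p"
  unfolding HKY_plus_def by blast

text \<open>For a probability vector \<open>p\<close> with \<open>s = p$0 + p$1\<close>, \<open>t = p$2 + p$3\<close> these are the spectral
  projections of every \<open>hky_mat p k l\<close>, with eigenvalues \<open>0\<close>, \<open>-l\<close>, \<open>-(k s + l t)\<close> and \<open>-(k t + l s)\<close>;
  the index classes \<open>{0, 1}\<close> and \<open>{2, 3}\<close> are the purines and the pyrimidines.\<close>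

definition stationary_proj :: "real^4 \<Rightarrow> mat4" where
  "stationary_proj p = (\<chi> i j. p$j)"

definition purine_proj :: "real^4 \<Rightarrow> mat4" where
  "purine_proj p = (\<chi> i j. if i \<in> {0, 1} \<and> j \<in> {0, 1}
     then (if i = j then 1 else 0) - p$j / (p$0 + p$1) else 0)"

definition pyrimidine_proj :: "real^4 \<Rightarrow> mat4" where
  "pyrimidine_proj p = (\<chi> i j. if i \<in> {2, 3} \<and> j \<in> {2, 3}
     then (if i = j then 1 else 0) - p$j / (p$2 + p$3) else 0)"

definition class_proj :: "real^4 \<Rightarrow> mat4" where
  "class_proj p = (\<chi> i j. (if (i \<in> {0, 1}) = (j \<in> {0, 1})
     then p$j / (if j \<in> {0, 1} then p$0 + p$1 else p$2 + p$3) else 0) - p$j)"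

lemma hky_mat_mult_stationary_proj: "hky_mat p k l ** stationary_proj p = 0"
  by (rule mat4_eqI) (auto simp: matrix_mult_4 hky_mat_entries stationary_proj_def algebra_simps)

lemma hky_mat_mult_purine_proj:
  assumes "p$0 + p$1 \<noteq> 0"
  shows "hky_mat p k l ** purine_proj p
    = (-(k * (p$0 + p$1) + l * (p$2 + p$3))) *\<^sub>R purine_proj p"
proof -
  define s where "s = p$0 + p$1"
  then have p1: "p$1 = s - p$0" and "s \<noteq> 0"
    using assms by auto
  then show ?thesis
    by (intro mat4_eqI, elim insertE emptyE;
        simp add: matrix_mult_4 hky_mat_entries purine_proj_def p1 field_simps)
qed

lemma hky_mat_mult_pyrimidine_proj:
  assumes "p$2 + p$3 \<noteq> 0"
  shows "hky_mat p k l ** pyrimidine_proj p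
    = (-(k * (p$2 + p$3) + l * (p$0 + p$1))) *\<^sub>R pyrimidine_proj p"
proof -
  define t where "t = p$2 + p$3"
  then have p3: "p$3 = t - p$2" and "t \<noteq> 0"
    using assms by auto
  then show ?thesis
    by (intro mat4_eqI, elim insertE emptyE;
        simp add: matrix_mult_4 hky_mat_entries pyrimidine_proj_def p3 field_simps)
qed


lemma hky_projs_sum:
  assumes "p$0 + p$1 \<noteq> 0" "p$2 + p$3 \<noteq> 0"
  shows "stationary_proj p + class_proj p + purine_proj p + pyrimidine_proj p = mat 1"
proof -
  define s t where "s = p$0 + p$1" and "t = p$2 + p$3"
  then have p13: "p$1 = s - p$0" "p$3 = t - p$2" and st: "s \<noteq> 0" "t \<noteq> 0"
    using assms by auto
  show ?thesis
    by (intro mat4_eqI, elim insertE emptyE; simp add: stationary_proj_def class_proj_def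
      purine_proj_def pyrimidine_proj_def mat_def p13 st field_simps)
qed

lemma hky_mat_mult_class_proj:
  assumes "p$0 + p$1 \<noteq> 0" "p$2 + p$3 \<noteq> 0" "p$0 + p$1 + p$2 + p$3 = 1"
  shows "hky_mat p k l ** class_proj p = (-l) *\<^sub>R class_proj p"
proof -
  define s t where "s = p$0 + p$1" and "t = p$2 + p$3"
  then have p13: "p$1 = s - p$0" "p$3 = t - p$2" and st: "s \<noteq> 0" "t \<noteq> 0" and t: "t = 1 - s"
    using assms by auto
  show ?thesis
    by (intro mat4_eqI, elim insertE emptyE;
        simp add: matrix_mult_4 hky_mat_entries class_proj_def p13 st field_simps)
      (simp_all add: t algebra_simps)
qed

lemma mexp_hky_mat:
  assumes "pos_prob_vec p"
  shows "mexp (hky_mat p k l) = stationary_proj p + exp (-l) *\<^sub>R class_proj p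
    + exp (-(k * (p$0 + p$1) + l * (p$2 + p$3))) *\<^sub>R purine_proj p
    + exp (-(k * (p$2 + p$3) + l * (p$0 + p$1))) *\<^sub>R pyrimidine_proj p"
proof -
  note p = pos_prob_vecD[OF assms]
  then have st: "p$0 + p$1 \<noteq> 0" "p$2 + p$3 \<noteq> 0" by linarith+
  define E where "E = (!) [stationary_proj p, class_proj p, purine_proj p, pyrimidine_proj p]"
  define c where "c = (!) [0, -l, -(k * (p$0 + p$1) + l * (p$2 + p$3)),
    -(k * (p$2 + p$3) + l * (p$0 + p$1))]"
  have "(\<Sum>i\<in>{0, 1, 2, 3}. E i) = mat 1"
    using hky_projs_sum[OF st] by (simp add: E_def add.assoc)
  moreover have "hky_mat p k l ** E i = c i *\<^sub>R E i" if "i \<in> {0, 1, 2, 3}" for i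
    using that hky_mat_mult_stationary_proj hky_mat_mult_class_proj[OF st p(5)]
      hky_mat_mult_purine_proj[OF st(1)] hky_mat_mult_pyrimidine_proj[OF st(2)]
    by (auto simp: E_def c_def)
  ultimately have "mexp (hky_mat p k l) = (\<Sum>i\<in>{0, 1, 2, 3}. exp (c i) *\<^sub>R E i)"
    by (rule mexp_spectral)
  then show ?thesis
    by (simp add: E_def c_def add.assoc)
qed

lemma mexp_hky_mat_minus_mat_1:
  assumes "pos_prob_vec p"
  shows "mexp (hky_mat p k l) - mat 1 = (exp (-l) - 1) *\<^sub>R class_proj p
    + (exp (-(k * (p$0 + p$1) + l * (p$2 + p$3))) - 1) *\<^sub>R purine_proj p
    + (exp (-(k * (p$2 + p$3) + l * (p$0 + p$1))) - 1) *\<^sub>R pyrimidine_proj p"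
proof -
  have "p$0 + p$1 \<noteq> 0" "p$2 + p$3 \<noteq> 0"
    using pos_prob_vecD[OF assms] by linarith+
  then have "mat 1 = stationary_proj p + class_proj p + purine_proj p + pyrimidine_proj p"
    by (simp add: hky_projs_sum)
  then show ?thesis
    by (simp add: mexp_hky_mat[OF assms] algebra_simps)
qed

lemma mexp_hky_mat_minus_mat_1_neq_hky_mat:
  assumes p: "pos_prob_vec p" and q: "pos_prob_vec q" and ne: "p$0 + p$1 \<noteq> p$2 + p$3"
  shows "mexp (hky_mat p 2 1) - mat 1 \<noteq> hky_mat q k l"
proof
  assume eq: "mexp (hky_mat p 2 1) - mat 1 = hky_mat q k l"
  note P = pos_prob_vecD[OF p] and Q = pos_prob_vecD[OF q]
  define s t e where "s = p$0 + p$1" and "t = p$2 + p$3" and "e = exp (-1 :: real)"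
  have st: "s > 0" "t > 0" "s + t = 1" and e: "0 < e" "e < 1"
    using P by (auto simp: s_def t_def e_def)
  have "exp (-(2 * s + 1 * t)) = e * exp (-s)" "exp (-(2 * t + 1 * s)) = e * exp (-t)"
    using st by (simp_all add: e_def flip: exp_add)
  then have entry: "hky_mat q k l $i$j = ((e - 1) *\<^sub>R class_proj p
      + (e * exp (-s) - 1) *\<^sub>R purine_proj p + (e * exp (-t) - 1) *\<^sub>R pyrimidine_proj p)$i$j" for i j
    using eq mexp_hky_mat_minus_mat_1[OF p, of 2 1, folded s_def t_def] by (simp add: e_def)
  have lq: "l * q$0 = (1 - e) * p$0" "l * q$1 = (1 - e) * p$1"
    "l * q$2 = (1 - e) * p$2" "l * q$3 = (1 - e) * p$3"
    using entry[of 2 0] entry[of 2 1] entry[of 0 2] entry[of 0 3]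
    by (simp_all add: hky_mat_entries class_proj_def purine_proj_def pyrimidine_proj_def algebra_simps)
  then have "l * (q$0 + q$1 + q$2 + q$3) = (1 - e) * (p$0 + p$1 + p$2 + p$3)"
    by (simp add: algebra_simps)
  then have "l = 1 - e" using P Q by simp
  then have q13: "q$1 = p$1" "q$3 = p$3" using lq e by simp_all
  have "k * p$1 = (e - 1) * (p$1 / s - p$1) + (e * exp (-s) - 1) * (- p$1 / s)"
    using entry[of 0 1] q13
    by (simp add: hky_mat_entries class_proj_def purine_proj_def pyrimidine_proj_def flip: s_def)
  also have "\<dots> = (1 - e + e * ((1 - exp (-s)) / s)) * p$1"
    using st by (simp add: field_simps)
  finally have ks: "k = 1 - e + e * ((1 - exp (-s)) / s)"
    using P by simp
  have "k * p$3 = (e - 1) * (p$3 / t - p$3) + (e * exp (-t) - 1) * (- p$3 / t)"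
    using entry[of 2 3] q13
    by (simp add: hky_mat_entries class_proj_def purine_proj_def pyrimidine_proj_def flip: t_def)
  also have "\<dots> = (1 - e + e * ((1 - exp (-t)) / t)) * p$3"
    using st by (simp add: field_simps)
  finally have kt: "k = 1 - e + e * ((1 - exp (-t)) / t)"
    using P by simp
  have "e * ((1 - exp (-s)) / s) = e * ((1 - exp (-t)) / t)"
    using ks kt by linarith
  then have "(1 - exp (-s)) / s = (1 - exp (-t)) / t"
    using e by (simp only: mult_cancel_left) simp
  then have "s = t" using exp_neg_secant_inj st by blast
  then show False using ne by (simp add: s_def t_def)
qed

lemma not_closed_odot_span_HKY_plus:
  assumes p: "pos_prob_vec p" and ne: "p$0 + p$1 \<noteq> p$2 + p$3"
  shows "\<not> closed_odot (span (HKY_plus p))"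
proof
  assume closed: "closed_odot (span (HKY_plus p))"
  define V where "V = {M :: mat4. p$3 * M$0$1 = p$1 * M$2$3}"
  have "subspace V"
    by (rule subspaceI) (auto simp: V_def algebra_simps)
  moreover have "HKY_plus p \<subseteq> V"
    by (auto simp: HKY_plus_def V_def hky_mat_entries)
  ultimately have span_V: "span (HKY_plus p) \<subseteq> V"
    by (rule span_minimal[rotated])
  define K where "K = hky_mat p 1 0"
  have "K \<in> span (HKY_plus p)"
    unfolding K_def by (intro span_base hky_mat_in_HKY_plus) simp_all
  then have "K ** K + K ** K \<in> V"
    using closed span_V unfolding closed_odot_def by blast
  then have "2 * p$1 * p$3 * ((p$2 + p$3) - (p$0 + p$1)) = 0"
    by (simp add: V_def K_def hky_mat_entries matrix_mult_4 algebra_simps)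
  then show False
    using pos_prob_vecD[OF p] ne by simp
qed

lemma not_unif_stable_between_HKY_plus:
  assumes p: "pos_prob_vec p" and ne: "p$0 + p$1 \<noteq> p$2 + p$3"
    and "HKY_plus p \<subseteq> M" and "M \<subseteq> HKY_plus_all"
  shows "\<not> unif_stable M"
proof
  assume "unif_stable M"
  moreover have "hky_mat p 2 1 \<in> M"
    using hky_mat_in_HKY_plus assms(3) by fastforce
  ultimately obtain Q where "Q \<in> M" and Q: "mexp (1 *\<^sub>R hky_mat p 2 1) - mat 1 = Q"
    unfolding unif_stable_def by (metis zero_le_one)
  then obtain q k l where "pos_prob_vec q" "Q = hky_mat q k l"
    using assms(4) unfolding HKY_plus_all_def HKY_plus_def by blast
  then show False
    using mexp_hky_mat_minus_mat_1_neq_hky_mat[OF p _ ne] Q by simp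
qed

theorem mainTheorem8:
  shows "(\<forall>p. pos_prob_vec p \<and> p$0 + p$1 \<noteq> p$2 + p$3 \<longrightarrow>
            \<not> closed_odot (span (HKY_plus p)) \<and> \<not> unif_stable (HKY_plus p))
         \<and> \<not> unif_stable HKY_plus_all"
proof (intro conjI allI impI)
  fix p :: "real^4"
  assume p: "pos_prob_vec p \<and> p$0 + p$1 \<noteq> p$2 + p$3"
  then have "HKY_plus p \<subseteq> HKY_plus_all"
    unfolding HKY_plus_all_def by blast
  then show "\<not> closed_odot (span (HKY_plus p))" "\<not> unif_stable (HKY_plus p)"
    using p not_closed_odot_span_HKY_plus not_unif_stable_between_HKY_plus by blast+
next
  define p :: "real^4" where "p = (\<chi> i. if i \<in> {0, 1} then 1/8 else 3/8)"
  have p: "pos_prob_vec p" and ne: "p$0 + p$1 \<noteq> p$2 + p$3"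
    by (simp_all add: pos_prob_vec_def p_def sum_UNIV_4)
  then have "HKY_plus p \<subseteq> HKY_plus_all"
    unfolding HKY_plus_all_def by blast
  then show "\<not> unif_stable HKY_plus_all"
    using not_unif_stable_between_HKY_plus[OF p ne] by blast
qed

end
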